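(* For every formula $\psi(x,\vec y)$ in the language of $\mathbf{A}^{\natural}$, every tuple $\vec c$ of elements of $A^{\natural}$, and every $a\in A$, there are $b\in A$ and $n,m\le 8$ such that $\psi(a^1,\vec c)=b^n$ and $\psi(a^3,\vec c)=b^m$.
   Context: $\mathbf{A}$ is a fixed non-trivial algebra whose set $\mathcal{F}$ of basic operations contains no constant symbols, and $h$ is a unary function on $A$. Construction of $\mathbf{A}^{\natural}$: universe is the disjoint union of eight copies $A_1,\dots,A_8$ of $A$ ($a^i$ is the copy of $a$ in $A_i$); operations: each $n$-ary $f\in\mathcal{F}$ with $f(a_1^{m_1},\dots,a_n^{m_n})=(f^{\mathbf{A}}(a_1,\dots,a_n))^5$; a ternary $\heartsuit$ with $\heartsuit(a^m,b^n,c^k)=a^1$ if $a^m=c^k$, $h(a)^5=b^n$, $m\in\{1,3,4\}$; $=a^2$ if $a^m=c^k$, $h(a)^5=b^n$, $m\in\{2,5,6,7,8\}$; $=a^4$ if $m,k\in\{1,3,4\}$ and ($a^m\ne c^k$ or $h(a)^5\ne b^n$); $=a^7$ if $\{m,k\}\cap\{2,5,6,7,8\}\ne\emptyset$ and ($a^m\ne c^k$ or $h(a)^5\ne b^n$); a unary $\Box$ with $\Box(a^m)=a^m$ for $m\in\{1,2\}$, $a^{m-1}$ for even $m\ge3$, $a^{m+1}$ for odd $m\ge3$. *)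

theory Defs
  imports Main
begin

text \<open>The algebra A has universe the type 'a, basic operation symbols of type 'f,
  interpretation ops f (applied to the list of arguments) and arity ar f.
  An element of the universe of A-natural is a pair (a, i) with 1 \<le> i \<le> 8,
  standing for the copy a^i of a in A_i.\<close>

type_synonym 'a nelem = "'a \<times> nat"

definition valid_nat :: "'a nelem \<Rightarrow> bool" where
  "valid_nat p \<longleftrightarrow> snd p \<in> {1..8}"

definition heart :: "('a \<Rightarrow> 'a) \<Rightarrow> 'a nelem \<Rightarrow> 'a nelem \<Rightarrow> 'a nelem \<Rightarrow> 'a nelem" where
  "heart h x y z =
    (let a = fst x; m = snd x; k = snd z;
         cond = (x = z \<and> (h a, 5) = y)
     in if cond \<and> m \<in> {1,3,4} then (a, 1)
        else if cond \<and> m \<in> {2,5,6,7,8} then (a, 2)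
        else if \<not> cond \<and> m \<in> {1,3,4} \<and> k \<in> {1,3,4} then (a, 4)
        else (a, 7))"

definition box :: "'a nelem \<Rightarrow> 'a nelem" where
  "box x = (let a = fst x; m = snd x in
     if m \<in> {1,2} then (a, m)
     else if even m then (a, m - 1)
     else (a, m + 1))"

datatype 'f nterm = Var nat | Op 'f "'f nterm list" | Heart "'f nterm" "'f nterm" "'f nterm"
  | Box "'f nterm"

fun wf_nterm :: "('f \<Rightarrow> nat) \<Rightarrow> 'f nterm \<Rightarrow> bool" where
  "wf_nterm ar (Var i) = True"
| "wf_nterm ar (Op f ts) = (length ts = ar f \<and> (\<forall>t \<in> set ts. wf_nterm ar t))"
| "wf_nterm ar (Heart s t u) = (wf_nterm ar s \<and> wf_nterm ar t \<and> wf_nterm ar u)"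
| "wf_nterm ar (Box t) = wf_nterm ar t"

fun eval_nat :: "('f \<Rightarrow> 'a list \<Rightarrow> 'a) \<Rightarrow> ('a \<Rightarrow> 'a) \<Rightarrow> (nat \<Rightarrow> 'a nelem) \<Rightarrow> 'f nterm \<Rightarrow> 'a nelem" where
  "eval_nat ops h env (Var i) = env i"
| "eval_nat ops h env (Op f ts) = (ops f (map (\<lambda>t. fst (eval_nat ops h env t)) ts), 5)"
| "eval_nat ops h env (Heart s t u) =
     heart h (eval_nat ops h env s) (eval_nat ops h env t) (eval_nat ops h env u)"
| "eval_nat ops h env (Box t) = box (eval_nat ops h env t)"

end

theory Submission
  imports Defs
begin

text \<open>Every operation of A-natural computes the A-coordinate of its value from the A-coordinates
  of its arguments alone: basic operations apply the operation of A, while heart and box return a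
  copy of their first argument. Hence the A-coordinate of a term value does not see the copy
  indices of the environment, and replacing a^1 by a^3 can change only the copy index of the
  result.\<close>

lemma fst_heart [simp]: "fst (heart h x y z) = fst x"
  unfolding heart_def Let_def by auto

lemma valid_nat_heart [simp]: "valid_nat (heart h x y z)"
  unfolding heart_def valid_nat_def Let_def by auto

lemma fst_box [simp]: "fst (box x) = fst x"
  unfolding box_def Let_def by auto

lemma valid_nat_box [simp]: "valid_nat x \<Longrightarrow> valid_nat (box x)"
  unfolding box_def valid_nat_def Let_def by (cases x) (auto elim: oddE)

lemma fst_eval_nat_cong:
  assumes "\<And>i. fst (env1 i) = fst (env2 i)"
  shows "fst (eval_nat ops h env1 t) = fst (eval_nat ops h env2 t)"
  by (induction t) (simp_all add: assms cong: map_cong)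

lemma valid_nat_eval_nat:
  assumes "\<And>i. valid_nat (env i)"
  shows "valid_nat (eval_nat ops h env t)"
proof (induction t)
  case (Op f ts)
  show ?case by (simp add: valid_nat_def)
qed (simp_all add: assms)

theorem lemma6p5:
  fixes ops :: "'f \<Rightarrow> 'a list \<Rightarrow> 'a" and ar :: "'f \<Rightarrow> nat" and h :: "'a \<Rightarrow> 'a"
    and psi :: "'f nterm" and c :: "nat \<Rightarrow> 'a nelem" and a :: 'a
  assumes nontriv: "\<exists>u v :: 'a. u \<noteq> v"
    and no_const: "\<And>f. ar f \<ge> 1"
    and wf: "wf_nterm ar psi"
    and c_valid: "\<And>i. valid_nat (c i)"
  shows "\<exists>b n m. n \<in> {1..8} \<and> m \<in> {1..8} \<and>
           eval_nat ops h (c(0 := (a, 1))) psi = (b, n) \<and>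
           eval_nat ops h (c(0 := (a, 3))) psi = (b, m)"
proof -
  let ?v1 = "eval_nat ops h (c(0 := (a, 1))) psi"
  let ?v3 = "eval_nat ops h (c(0 := (a, 3))) psi"
  have same_fst: "fst ?v1 = fst ?v3"
    by (rule fst_eval_nat_cong) simp
  have "valid_nat ((c(0 := (a, k))) i)" if "k \<in> {1, 3}" for k i
    using c_valid that by (auto simp: valid_nat_def)
  then have "valid_nat ?v1" "valid_nat ?v3"
    by (simp_all add: valid_nat_eval_nat)
  with same_fst show ?thesis
    unfolding valid_nat_def by (metis prod.collapse)
qed

end
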